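(* Consider the algebra of Laurent polynomials in nonzero variables $a,b,c,d,e,f,g,h$ with the log-canonical Poisson bracket determined by $\{a,b\}=\tfrac12 ab,\ \{a,c\}=0,\ \{a,d\}=-\tfrac14 ad,\ \{a,e\}=\tfrac14 ae,\ \{a,f\}=\tfrac14 af,\ \{a,g\}=-\tfrac14 ag,\ \{a,h\}=\tfrac14 ah,$ $\{b,c\}=0,\ \{b,d\}=-\tfrac14 bd,\ \{b,e\}=\tfrac14 be,\ \{b,f\}=-\tfrac14 bf,\ \{b,g\}=-\tfrac14 bg,\ \{b,h\}=\tfrac14 bh,$ $\{c,d\}=-\tfrac12 cd,\ \{c,e\}=\tfrac12 ce,\ \{c,f\}=\{c,g\}=\{c,h\}=0,$ $\{d,e\}=0,\ \{d,f\}=\tfrac14 df,\ \{d,g\}=\{d,h\}=0,$ $\{e,f\}=-\tfrac14 ef,\ \{e,g\}=\{e,h\}=0,\ \{f,g\}=\tfrac14 fg,\ \{f,h\}=-\tfrac14 fh,\ \{h,g\}=0$. Then $de$ and $hg$ are Casimir elements and the symplectic leaves are $6$-dimensional.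
   Context: A log-canonical bracket is extended from the generators to all Laurent polynomials by bilinearity, antisymmetry and the Leibniz rule. (These are the $\lambda$-lengths of a complete system of arcs on a Riemann sphere with two holes, each with two bordered cusps — the $PIII^{D_6}$ case.) *)

theory Defs
  imports "HOL-Analysis.Analysis"
begin

text \<open>Coordinates a,b,c,d,e,f,g,h are the components 0,...,7 of a vector in real^8.\<close>

definition torus :: "real^8 \<Rightarrow> bool" where
  "torus x \<longleftrightarrow> (\<forall>i. x $ i \<noteq> 0)"

definition lmono :: "int^8 \<Rightarrow> real^8 \<Rightarrow> real" where
  "lmono m x = (\<Prod>i\<in>UNIV. x $ i powi (m $ i))"

definition laurent :: "(real^8 \<Rightarrow> real) \<Rightarrow> bool" where
  "laurent F \<longleftrightarrow> (\<exists>S c. finite S \<and> (\<forall>x. torus x \<longrightarrow> F x = (\<Sum>m\<in>S. c m * lmono m x)))"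

text \<open>Upper-triangular coefficients of the log-canonical bracket {x_i,x_j} = omega i j x_i x_j.\<close>
definition wup :: "8 \<Rightarrow> 8 \<Rightarrow> real" where
  "wup i j =
    (if i = 0 \<and> j = 1 then 1/2
     else if i = 0 \<and> j = 3 then -1/4
     else if i = 0 \<and> j = 4 then 1/4
     else if i = 0 \<and> j = 5 then 1/4
     else if i = 0 \<and> j = 6 then -1/4
     else if i = 0 \<and> j = 7 then 1/4
     else if i = 1 \<and> j = 3 then -1/4
     else if i = 1 \<and> j = 4 then 1/4
     else if i = 1 \<and> j = 5 then -1/4
     else if i = 1 \<and> j = 6 then -1/4
     else if i = 1 \<and> j = 7 then 1/4
     else if i = 2 \<and> j = 3 then -1/2
     else if i = 2 \<and> j = 4 then 1/2
     else if i = 3 \<and> j = 5 then 1/4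
     else if i = 4 \<and> j = 5 then -1/4
     else if i = 5 \<and> j = 6 then 1/4
     else if i = 5 \<and> j = 7 then -1/4
     else 0)"

definition omega :: "8 \<Rightarrow> 8 \<Rightarrow> real" where
  "omega i j = wup i j - wup j i"

definition pd :: "8 \<Rightarrow> (real^8 \<Rightarrow> real) \<Rightarrow> real^8 \<Rightarrow> real" where
  "pd i F x = deriv (\<lambda>t. F (\<chi> k. if k = i then t else x $ k)) (x $ i)"

text \<open>The log-canonical Poisson bracket (the unique biderivation extending the
  generator brackets), evaluated at a point.\<close>
definition pbr :: "(real^8 \<Rightarrow> real) \<Rightarrow> (real^8 \<Rightarrow> real) \<Rightarrow> real^8 \<Rightarrow> real" where
  "pbr F G x = (\<Sum>i\<in>UNIV. \<Sum>j\<in>UNIV. omega i j * x $ i * x $ j * pd i F x * pd j G x)"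

definition casimir :: "(real^8 \<Rightarrow> real) \<Rightarrow> bool" where
  "casimir F \<longleftrightarrow> laurent F \<and> (\<forall>G. laurent G \<longrightarrow> (\<forall>x. torus x \<longrightarrow> pbr F G x = 0))"

definition ham :: "(real^8 \<Rightarrow> real) \<Rightarrow> real^8 \<Rightarrow> real^8" where
  "ham F x = (\<chi> i. pbr (\<lambda>y. y $ i) F x)"

text \<open>Dimension of the symplectic leaf through x: dimension of the span of the
  Hamiltonian vectors at x.\<close>
definition leaf_dim :: "real^8 \<Rightarrow> nat" where
  "leaf_dim x = dim {ham F x | F. laurent F}"

end

theory Submission
  imports Defs
begin

text \<open>Since \<open>{x\<^sub>i, x\<^sub>j} = omega i j x\<^sub>i x\<^sub>j\<close>, everything reduces to the constant
  matrix \<open>omega\<close>. The rows of \<open>omega\<close> for \<open>d, e\<close> and for \<open>h, g\<close> are negatives of each other, which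
  makes \<open>de\<close> and \<open>hg\<close> Casimirs. By the chain rule the Hamiltonian vector of any \<open>F\<close> at \<open>x\<close> is a
  combination of the Hamiltonian vectors of the coordinates, whose \<open>i\<close>-th components are
  \<open>omega i j x\<^sub>i x\<^sub>j\<close>; on the torus they span a space of dimension \<open>rank omega = 6\<close>, a basis being
  given by the coordinates other than \<open>e\<close> and \<open>g\<close>.\<close>

lemma exhaust_8:
  fixes i :: 8
  shows "i = 0 \<or> i = 1 \<or> i = 2 \<or> i = 3 \<or> i = 4 \<or> i = 5 \<or> i = 6 \<or> i = 7"
proof (induct i)
  case (of_int z)
  then have "z = 0 \<or> z = 1 \<or> z = 2 \<or> z = 3 \<or> z = 4 \<or> z = 5 \<or> z = 6 \<or> z = 7" by fastforce
  then show ?case by auto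
qed

lemma sum_UNIV_8: "sum f (UNIV :: 8 set) = f 0 + f 1 + f 2 + f 3 + f 4 + f 5 + f 6 + f 7"
proof -
  have UNIV_8: "(UNIV :: 8 set) = {0, 1, 2, 3, 4, 5, 6, 7}"
    using exhaust_8 by auto
  show ?thesis
    unfolding UNIV_8 by (simp add: add.assoc)
qed

lemma omega_col_4: "omega i 4 = - omega i 3"
  using exhaust_8[of i] by (elim disjE) (simp_all add: omega_def wup_def)

lemma omega_col_6: "omega i 6 = - omega i 7"
  using exhaust_8[of i] by (elim disjE) (simp_all add: omega_def wup_def)

lemma omega_row_4: "omega 4 i = - omega 3 i"
  using omega_col_4[of i] unfolding omega_def by linarith

lemma omega_row_6: "omega 6 i = - omega 7 i"
  using omega_col_6[of i] unfolding omega_def by linarith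

text \<open>The minor of \<open>omega\<close> on the coordinates \<open>a, b, c, d, f, h\<close> is nonsingular.\<close>
lemma omega_kernel_eq_0:
  fixes y :: "8 \<Rightarrow> real"
  assumes "y 4 = 0" "y 6 = 0" and kernel: "\<And>i. (\<Sum>l\<in>UNIV. omega i l * y l) = 0"
  shows "y l = 0"
proof -
  have row: "omega i 0 * y 0 + omega i 1 * y 1 + omega i 2 * y 2 + omega i 3 * y 3
      + omega i 5 * y 5 + omega i 7 * y 7 = 0" for i
    using kernel[of i] assms(1,2) by (simp add: sum_UNIV_8)
  have "y 0 = 0 \<and> y 1 = 0 \<and> y 2 = 0 \<and> y 3 = 0 \<and> y 5 = 0 \<and> y 7 = 0"
    using row[of 0] row[of 1] row[of 2] row[of 3] row[of 5] row[of 6]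
    by (simp add: omega_def wup_def)
  then show ?thesis
    using assms(1,2) exhaust_8[of l] by (elim disjE) simp_all
qed

lemma has_field_derivative_coord:
  "((\<lambda>t. (\<chi> k. if k = i then t else x $ k) $ j) has_field_derivative (if j = i then 1 else 0)) (at s)"
  by (cases "j = i") (auto intro!: derivative_eq_intros)

lemma pd_coord: "pd i (\<lambda>y. y $ j) x = (if j = i then 1 else 0)"
  unfolding pd_def by (rule DERIV_imp_deriv[OF has_field_derivative_coord])

lemma pd_coord_mult:
  "pd i (\<lambda>y. y $ j * y $ k) x = (if j = i then x $ k else 0) + (if k = i then x $ j else 0)"
proof -
  have "pd i (\<lambda>y. y $ j * y $ k) x
      = (if j = i then 1 else 0) * (\<chi> l. if l = i then x $ i else x $ l) $ k
        + (if k = i then 1 else 0) * (\<chi> l. if l = i then x $ i else x $ l) $ j"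
    unfolding pd_def
    by (rule DERIV_imp_deriv[OF DERIV_mult[OF has_field_derivative_coord has_field_derivative_coord]])
  then show ?thesis by auto
qed

lemma lmono_axis: "lmono (axis j 1) = (\<lambda>x. x $ j)"
proof
  fix x :: "real^8"
  have "lmono (axis j 1) x = (\<Prod>i\<in>UNIV. if i = j then x $ i else 1)"
    unfolding lmono_def axis_def by (intro prod.cong) auto
  then show "lmono (axis j 1) x = x $ j" by (simp add: prod.delta)
qed

lemma lmono_axis_add_axis:
  assumes "j \<noteq> k"
  shows "lmono (axis j 1 + axis k 1) = (\<lambda>x. x $ j * x $ k)"
proof
  fix x :: "real^8"
  have "lmono (axis j 1 + axis k 1) x
      = (\<Prod>i\<in>UNIV. (if i = j then x $ i else 1) * (if i = k then x $ i else 1))"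
    unfolding lmono_def axis_def using assms by (intro prod.cong) auto
  then show "lmono (axis j 1 + axis k 1) x = x $ j * x $ k" by (simp add: prod.distrib prod.delta)
qed

lemma laurent_lmono: "laurent (lmono m)"
  unfolding laurent_def by (rule exI[of _ "{m}"], rule exI[of _ "\<lambda>_. 1"]) simp

lemma laurent_coord: "laurent (\<lambda>y. y $ j)"
  using laurent_lmono[of "axis j 1"] by (simp only: lmono_axis)

lemma laurent_coord_mult:
  assumes "j \<noteq> k"
  shows "laurent (\<lambda>y. y $ j * y $ k)"
  using laurent_lmono[of "axis j 1 + axis k 1"] by (simp only: lmono_axis_add_axis[OF assms])

lemma casimir_coord_mult:
  assumes "j \<noteq> k" and opposite_rows: "\<And>l. omega k l = - omega j l"
  shows "casimir (\<lambda>y. y $ j * y $ k)"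
  unfolding casimir_def
proof (intro conjI allI impI)
  show "laurent (\<lambda>y. y $ j * y $ k)"
    using laurent_coord_mult[OF \<open>j \<noteq> k\<close>] .
  fix G :: "real^8 \<Rightarrow> real" and x :: "real^8"
  let ?P = "\<lambda>y. y $ j * y $ k"
  have column: "(\<Sum>a\<in>UNIV. omega a b * x $ a * x $ b * pd a ?P x * pd b G x) = 0" for b
  proof -
    have "(\<Sum>a\<in>UNIV. omega a b * x $ a * x $ b * pd a ?P x * pd b G x)
        = (\<Sum>a\<in>UNIV. (if a = j then omega j b * x $ j * x $ b * x $ k * pd b G x else 0)
                    + (if a = k then omega k b * x $ k * x $ b * x $ j * pd b G x else 0))"
      by (intro sum.cong) (auto simp: pd_coord_mult)
    also have "\<dots> = omega j b * x $ j * x $ b * x $ k * pd b G x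
                   + omega k b * x $ k * x $ b * x $ j * pd b G x"
      by (simp add: sum.distrib)
    also have "\<dots> = 0"
      using opposite_rows[of b] by (simp add: algebra_simps)
    finally show ?thesis .
  qed
  have "pbr ?P G x = (\<Sum>b\<in>UNIV. \<Sum>a\<in>UNIV. omega a b * x $ a * x $ b * pd a ?P x * pd b G x)"
    unfolding pbr_def by (rule sum.swap)
  then show "pbr ?P G x = 0"
    using column by simp
qed

definition coord_ham :: "real^8 \<Rightarrow> 8 \<Rightarrow> real^8" where
  "coord_ham x j = (\<chi> i. omega i j * x $ i * x $ j)"

lemma ham_eq_sum_coord_ham: "ham F x = (\<Sum>j\<in>UNIV. pd j F x *\<^sub>R coord_ham x j)"
proof -
  have "ham F x $ i = (\<Sum>j\<in>UNIV. pd j F x *\<^sub>R coord_ham x j) $ i" for i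
  proof -
    have "ham F x $ i
        = (\<Sum>a\<in>UNIV. \<Sum>b\<in>UNIV. omega a b * x $ a * x $ b * pd a (\<lambda>y. y $ i) x * pd b F x)"
      unfolding ham_def pbr_def by simp
    also have "\<dots> = (\<Sum>a\<in>UNIV. if a = i then (\<Sum>b\<in>UNIV. omega i b * x $ i * x $ b * pd b F x) else 0)"
      by (intro sum.cong) (auto simp: pd_coord)
    also have "\<dots> = (\<Sum>b\<in>UNIV. omega i b * x $ i * x $ b * pd b F x)"
      by simp
    also have "\<dots> = (\<Sum>j\<in>UNIV. pd j F x *\<^sub>R coord_ham x j) $ i"
      unfolding sum_component coord_ham_def by (simp add: algebra_simps)
    finally show ?thesis .
  qed
  then show ?thesis by (simp add: vec_eq_iff)
qed

lemma ham_coord: "ham (\<lambda>y. y $ j) x = coord_ham x j"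
proof -
  have "(\<Sum>l\<in>UNIV. pd l (\<lambda>y. y $ j) x *\<^sub>R coord_ham x l) = (\<Sum>l\<in>UNIV. if l = j then coord_ham x j else 0)"
    by (intro sum.cong) (auto simp: pd_coord)
  then show ?thesis
    unfolding ham_eq_sum_coord_ham by simp
qed

lemma coord_ham_4: "x $ 3 \<noteq> 0 \<Longrightarrow> coord_ham x 4 = (- (x $ 4 / x $ 3)) *\<^sub>R coord_ham x 3"
  by (simp add: vec_eq_iff coord_ham_def omega_col_4)

lemma coord_ham_6: "x $ 7 \<noteq> 0 \<Longrightarrow> coord_ham x 6 = (- (x $ 6 / x $ 7)) *\<^sub>R coord_ham x 7"
  by (simp add: vec_eq_iff coord_ham_def omega_col_6)

lemma coord_ham_combination_eq_0:
  assumes "torus x" and "4 \<notin> J" "6 \<notin> J"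
    and combination: "(\<Sum>j\<in>J. c j *\<^sub>R coord_ham x j) = 0" and "j \<in> J"
  shows "c j = 0"
proof -
  have nonzero: "x $ i \<noteq> 0" for i
    using \<open>torus x\<close> by (simp add: torus_def)
  define y where "y l = (if l \<in> J then c l * x $ l else 0)" for l
  have "y l = 0" for l
  proof (rule omega_kernel_eq_0)
    show "y 4 = 0" "y 6 = 0"
      using \<open>4 \<notin> J\<close> \<open>6 \<notin> J\<close> by (simp_all add: y_def)
    fix i
    have "x $ i * (\<Sum>l\<in>UNIV. omega i l * y l) = (\<Sum>l\<in>J. x $ i * (omega i l * (c l * x $ l)))"
      by (simp add: y_def sum_distrib_left if_distrib[of "\<lambda>v. _ * v"] sum.If_cases
          cong: if_cong)
    also have "\<dots> = (\<Sum>j\<in>J. c j *\<^sub>R coord_ham x j) $ i"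
      unfolding sum_component coord_ham_def by (simp add: algebra_simps)
    finally show "(\<Sum>l\<in>UNIV. omega i l * y l) = 0"
      using combination nonzero[of i] by simp
  qed
  then show ?thesis
    using \<open>j \<in> J\<close> nonzero[of j] by (metis mult_eq_0_iff y_def)
qed

lemma inj_on_coord_ham:
  assumes "torus x" and "4 \<notin> J" "6 \<notin> J"
  shows "inj_on (coord_ham x) J"
proof (rule inj_onI, rule ccontr)
  fix j k
  assume "j \<in> J" "k \<in> J" "coord_ham x j = coord_ham x k" "j \<noteq> k"
  define c :: "8 \<Rightarrow> real" where "c l = (if l = j then 1 else 0) - (if l = k then 1 else 0)" for l
  have "(\<Sum>l\<in>J. c l *\<^sub>R coord_ham x l) = coord_ham x j - coord_ham x k"
    using \<open>j \<in> J\<close> \<open>k \<in> J\<close>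
    by (simp add: c_def scaleR_left_diff_distrib sum_subtractf if_distrib[of "\<lambda>r. r *\<^sub>R _"]
        cong: if_cong)
  then have "c j = 0"
    using coord_ham_combination_eq_0[OF assms] \<open>j \<in> J\<close> \<open>coord_ham x j = coord_ham x k\<close>
    by simp
  then show False
    using \<open>j \<noteq> k\<close> by (simp add: c_def)
qed

lemma independent_coord_ham:
  assumes "torus x" and "4 \<notin> J" "6 \<notin> J"
  shows "independent (coord_ham x ` J)"
proof (rule independent_if_scalars_zero)
  show "finite (coord_ham x ` J)" by simp
  fix f v
  assume "(\<Sum>v\<in>coord_ham x ` J. f v *\<^sub>R v) = 0" and "v \<in> coord_ham x ` J"
  then obtain j where "j \<in> J" "v = coord_ham x j"
    and "(\<Sum>j\<in>J. f (coord_ham x j) *\<^sub>R coord_ham x j) = 0"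
    by (auto simp: sum.reindex[OF inj_on_coord_ham[OF assms]])
  then show "f v = 0"
    using coord_ham_combination_eq_0[OF assms, of "f \<circ> coord_ham x"] by simp
qed

lemma coord_ham_in_span:
  assumes "torus x"
  shows "coord_ham x l \<in> span (coord_ham x ` {0, 1, 2, 3, 5, 7})"
    (is "_ \<in> span ?B")
proof -
  have nonzero: "x $ i \<noteq> 0" for i
    using \<open>torus x\<close> by (simp add: torus_def)
  have "coord_ham x 3 \<in> span ?B" "coord_ham x 7 \<in> span ?B"
    by (simp_all add: span_base)
  then have "coord_ham x 4 \<in> span ?B" "coord_ham x 6 \<in> span ?B"
    unfolding coord_ham_4[OF nonzero] coord_ham_6[OF nonzero] by (simp_all only: span_scale)
  then show ?thesis
    using exhaust_8[of l] by (auto intro: span_base)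
qed

lemma leaf_dim_eq_6:
  assumes "torus x"
  shows "leaf_dim x = 6"
proof -
  let ?J = "{0, 1, 2, 3, 5, 7} :: 8 set"
  let ?H = "{ham F x | F. laurent F}"
  let ?B = "coord_ham x ` ?J"
  have "inj_on (coord_ham x) ?J"
    by (rule inj_on_coord_ham[OF assms]) simp_all
  then have card_B: "card ?B = 6"
    by (simp add: card_image)
  have "?H \<subseteq> span ?B"
    using coord_ham_in_span[OF assms]
    by (auto simp: ham_eq_sum_coord_ham intro!: span_sum span_scale)
  then have "dim ?H \<le> card ?B"
    by (rule dim_le_card) simp
  moreover have "?B \<subseteq> ?H"
    using laurent_coord by (auto simp flip: ham_coord)
  then have "card ?B \<le> dim ?H"
    by (rule independent_card_le_dim) (rule independent_coord_ham[OF assms]; simp)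
  ultimately show ?thesis
    unfolding leaf_dim_def card_B by simp
qed

theorem mainTheorem5:
  shows "casimir (\<lambda>x. x $ 3 * x $ 4) \<and> casimir (\<lambda>x. x $ 7 * x $ 6)
         \<and> (\<forall>x. torus x \<longrightarrow> leaf_dim x = 6)"
proof (intro conjI allI impI)
  show "casimir (\<lambda>x. x $ 3 * x $ 4)"
    by (rule casimir_coord_mult) (simp_all add: omega_row_4)
  show "casimir (\<lambda>x. x $ 7 * x $ 6)"
    by (rule casimir_coord_mult) (simp_all add: omega_row_6)
qed (rule leaf_dim_eq_6)

end
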